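(* Let $\mathcal{E}$ be a metric space, $\lambda,\kappa,\mu\colon\mathcal{E}\to[0,\infty)$ continuous, $t\ge0$, $J$ an $\mathcal{E}$-valued càdlàg process, $J_n=J$ for all $n$, and let $I(a)=\inf_{\gamma\in\mathcal{R}(t)}\ell(\gamma;a)$ for $a\in\mathbb{R}$. Then $I(a)=0$ if and only if $a\in\mathcal{R}(t)$. If $I(a)>0$ for some $a\in\mathbb{R}$, then exactly one of the following holds: (1) $a<c_-:=\inf\mathcal{R}(t)$ and $I(b)=\ell(c_-;b)$ for all $b\in(-\infty,c_-]$; (2) $a>c_+:=\sup\mathcal{R}(t)$ and $I(b)=\ell(c_+;b)$ for all $b\in[c_+,\infty)$; (3) neither of the previous cases holds and $I(b)=\min\{\ell(c_-;b),\ell(c_+;b)\}$ for all $b\in[c_-,c_+]$, where $c_-=\sup(\mathcal{R}(t)\cap(-\infty,a))$ and $c_+=\inf(\mathcal{R}(t)\cap(a,\infty))$.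
   Context: $\phi_t(f)=\int_0^t\lambda(f(s))\exp(-\kappa(f(s))\int_s^t\mu(f(r))\,dr)\,ds$. $\mathcal{R}(t)$ (attainable parameters) is the set of $\gamma\in[0,\infty)$ such that for every $\epsilon>0$ there is $N_\epsilon$ with $\mathbb{P}(\phi_t(J_n)\in(\gamma-\epsilon,\gamma+\epsilon))>0$ for all $n\ge N_\epsilon$; it is a non-empty closed subset of $[0,\infty)$. For $\gamma\ge0$: $\ell(\gamma;a)=\infty$ for $a<0$, $\ell(\gamma;0)=\gamma$, $\ell(\gamma;a)=\gamma-a+a\log(a/\gamma)$ for $a>0$ (equal to $\infty$ if $\gamma=0$). *)

theory Defs
  imports "HOL-Probability.Probability"
begin

definition cadlag :: "(real \<Rightarrow> 'e::metric_space) \<Rightarrow> bool" where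
  "cadlag f \<longleftrightarrow> (\<forall>s\<ge>0. continuous (at_right s) f) \<and>
                   (\<forall>s>0. \<exists>l. (f \<longlongrightarrow> l) (at_left s))"

definition cadlag_process :: "'w measure \<Rightarrow> ('w \<Rightarrow> real \<Rightarrow> 'e::metric_space) \<Rightarrow> bool" where
  "cadlag_process M J \<longleftrightarrow> (\<forall>s\<ge>0. (\<lambda>\<omega>. J \<omega> s) \<in> borel_measurable M) \<and>
                          (\<forall>\<omega>\<in>space M. cadlag (J \<omega>))"

definition phi :: "('e \<Rightarrow> real) \<Rightarrow> ('e \<Rightarrow> real) \<Rightarrow> ('e \<Rightarrow> real) \<Rightarrow> real \<Rightarrow> (real \<Rightarrow> 'e) \<Rightarrow> real" where
  "phi lam kap mu t f =
     integral {0..t} (\<lambda>s. lam (f s) * exp (- kap (f s) * integral {s..t} (\<lambda>r. mu (f r))))"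

definition attainable ::
  "'w measure \<Rightarrow> ('e \<Rightarrow> real) \<Rightarrow> ('e \<Rightarrow> real) \<Rightarrow> ('e \<Rightarrow> real) \<Rightarrow> real \<Rightarrow>
   (nat \<Rightarrow> 'w \<Rightarrow> real \<Rightarrow> 'e) \<Rightarrow> real set" where
  "attainable M lam kap mu t Js =
     {\<gamma>. \<gamma> \<ge> 0 \<and> (\<forall>\<epsilon>>0. \<exists>N. \<forall>n\<ge>N.
        measure M {\<omega> \<in> space M. phi lam kap mu t (Js n \<omega>) \<in> {\<gamma> - \<epsilon> <..< \<gamma> + \<epsilon>}} > 0)}"

definition ell :: "real \<Rightarrow> real \<Rightarrow> ereal" where
  "ell \<gamma> a = (if a < 0 then \<infinity>
              else if a = 0 then ereal \<gamma>
              else if \<gamma> = 0 then \<infinity>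
              else ereal (\<gamma> - a + a * ln (a / \<gamma>)))"

definition rate :: "real set \<Rightarrow> real \<Rightarrow> ereal" where
  "rate R a = (INF \<gamma>\<in>R. ell \<gamma> a)"

end

theory Submission
  imports Defs
begin

text \<open>Since \<open>J\<^sub>n = J\<close>, a parameter is attainable exactly when it lies in the support of the law of
  \<open>\<phi>\<^sub>t(J)\<close>, a nonnegative random variable; so \<open>\<R>(t)\<close> is a nonempty closed subset of \<open>[0,\<infinity>)\<close>
  (it contains the essential infimum of \<open>\<phi>\<^sub>t(J)\<close>). For fixed \<open>a\<close> the map \<open>\<gamma> \<mapsto> \<ell>(\<gamma>; a)\<close> vanishes only
  at \<open>\<gamma> = a\<close>, decreases on \<open>[0, a]\<close> and increases on \<open>[a, \<infinity>)\<close>. Hence its infimum over the closed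
  set \<open>\<R>(t)\<close> is attained at the points of \<open>\<R>(t)\<close> nearest to \<open>a\<close> on either side: at \<open>inf \<R>(t)\<close> to
  the left of \<open>\<R>(t)\<close>, at \<open>sup \<R>(t)\<close> to its right, and at the two ends of the gap of \<open>\<R>(t)\<close> around
  \<open>a\<close> otherwise.\<close>

lemma ell_nonneg: "0 \<le> \<gamma> \<Longrightarrow> 0 \<le> ell \<gamma> a"
proof -
  assume "0 \<le> \<gamma>"
  moreover have "a * ln (\<gamma> / a) \<le> \<gamma> - a" if "0 < \<gamma>" "0 < a"
    using mult_left_mono[OF ln_le_minus_one[of "\<gamma> / a"], of a] that by (simp add: right_diff_distrib)
  ultimately show ?thesis
    by (auto simp: ell_def ln_div algebra_simps)
qed

lemma ell_self: "0 \<le> a \<Longrightarrow> ell a a = 0"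
  by (auto simp: ell_def)

lemma ell_pos: "0 \<le> \<gamma> \<Longrightarrow> 0 \<le> a \<Longrightarrow> \<gamma> \<noteq> a \<Longrightarrow> 0 < ell \<gamma> a"
proof -
  assume "0 \<le> \<gamma>" "0 \<le> a" "\<gamma> \<noteq> a"
  moreover have "a * ln (\<gamma> / a) < \<gamma> - a" if "0 < \<gamma>" "0 < a" "\<gamma> \<noteq> a"
  proof -
    have "ln (\<gamma> / a) < \<gamma> / a - 1"
      using ln_le_minus_one[of "\<gamma> / a"] ln_eq_minus_one[of "\<gamma> / a"] that by fastforce
    from mult_strict_left_mono[OF this \<open>0 < a\<close>] show ?thesis
      using that by (simp add: right_diff_distrib)
  qed
  ultimately show ?thesis
    by (auto simp: ell_def ln_div algebra_simps)
qed

text \<open>For positive arguments \<open>\<ell>(\<gamma>\<^sub>2; a) - \<ell>(\<gamma>\<^sub>1; a) = (\<gamma>\<^sub>2 - \<gamma>\<^sub>1) - a ln(\<gamma>\<^sub>2/\<gamma>\<^sub>1)\<close>, and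
  \<open>\<gamma>\<^sub>1 ln(\<gamma>\<^sub>2/\<gamma>\<^sub>1) \<le> \<gamma>\<^sub>2 - \<gamma>\<^sub>1 \<le> \<gamma>\<^sub>2 ln(\<gamma>\<^sub>2/\<gamma>\<^sub>1)\<close> by \<open>ln x \<le> x - 1\<close>.\<close>
lemma ell_antimono_below:
  assumes "0 \<le> \<gamma>\<^sub>1" "\<gamma>\<^sub>1 \<le> \<gamma>\<^sub>2" "\<gamma>\<^sub>2 \<le> a"
  shows "ell \<gamma>\<^sub>2 a \<le> ell \<gamma>\<^sub>1 a"
proof (cases "a = 0 \<or> \<gamma>\<^sub>1 = 0")
  case True
  then show ?thesis using assms by (auto simp: ell_def)
next
  case False
  then have pos: "0 < \<gamma>\<^sub>1" "0 < \<gamma>\<^sub>2" "0 < a" using assms by auto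
  have "\<gamma>\<^sub>2 * ln (\<gamma>\<^sub>1 / \<gamma>\<^sub>2) \<le> \<gamma>\<^sub>1 - \<gamma>\<^sub>2"
    using mult_left_mono[OF ln_le_minus_one[of "\<gamma>\<^sub>1 / \<gamma>\<^sub>2"], of \<gamma>\<^sub>2] pos by (simp add: right_diff_distrib)
  moreover have "a * ln (\<gamma>\<^sub>1 / \<gamma>\<^sub>2) \<le> \<gamma>\<^sub>2 * ln (\<gamma>\<^sub>1 / \<gamma>\<^sub>2)"
    using assms pos by (intro mult_right_mono_neg) auto
  ultimately show ?thesis
    using pos by (simp add: ell_def ln_div algebra_simps)
qed

lemma ell_mono_above:
  assumes "a \<le> \<gamma>\<^sub>1" "\<gamma>\<^sub>1 \<le> \<gamma>\<^sub>2"
  shows "ell \<gamma>\<^sub>1 a \<le> ell \<gamma>\<^sub>2 a"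
proof (cases "a \<le> 0")
  case True
  then show ?thesis using assms by (auto simp: ell_def)
next
  case False
  then have pos: "0 < \<gamma>\<^sub>1" "0 < \<gamma>\<^sub>2" "0 < a" using assms by auto
  have "\<gamma>\<^sub>1 * ln (\<gamma>\<^sub>2 / \<gamma>\<^sub>1) \<le> \<gamma>\<^sub>2 - \<gamma>\<^sub>1"
    using mult_left_mono[OF ln_le_minus_one[of "\<gamma>\<^sub>2 / \<gamma>\<^sub>1"], of \<gamma>\<^sub>1] pos by (simp add: right_diff_distrib)
  moreover have "a * ln (\<gamma>\<^sub>2 / \<gamma>\<^sub>1) \<le> \<gamma>\<^sub>1 * ln (\<gamma>\<^sub>2 / \<gamma>\<^sub>1)"
    using assms pos by (intro mult_right_mono) auto
  ultimately show ?thesis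
    using pos by (simp add: ell_def ln_div algebra_simps)
qed

lemma rate_eqI:
  assumes "c \<in> R" "ell c b \<le> e" "\<And>\<gamma>. \<gamma> \<in> R \<Longrightarrow> e \<le> ell \<gamma> b"
  shows "rate R b = e"
  unfolding rate_def using assms by (intro antisym INF_greatest) (auto intro: INF_lower2)

lemma closed_nonneg_Inf_mem:
  fixes R :: "real set"
  assumes "closed R" "R \<noteq> {}" "R \<subseteq> {0..}"
  shows "Inf R \<in> R" "\<And>\<gamma>. \<gamma> \<in> R \<Longrightarrow> Inf R \<le> \<gamma>"
proof -
  have "bdd_below R" using assms(3) by (auto simp: bdd_below_def)
  then show "Inf R \<in> R" "\<And>\<gamma>. \<gamma> \<in> R \<Longrightarrow> Inf R \<le> \<gamma>"
    using assms by (auto intro: closed_contains_Inf cInf_lower)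
qed

lemma rate_eq_ell_Inf:
  fixes R :: "real set"
  assumes R: "closed R" "R \<noteq> {}" "R \<subseteq> {0..}" and "b \<le> Inf R"
  shows "rate R b = ell (Inf R) b"
proof (rule rate_eqI)
  show "Inf R \<in> R" using closed_nonneg_Inf_mem[OF R] by simp
  show "ell (Inf R) b \<le> ell \<gamma> b" if "\<gamma> \<in> R" for \<gamma>
    using closed_nonneg_Inf_mem[OF R] assms(4) that by (intro ell_mono_above) auto
qed simp

lemma rate_eq_ell_Sup:
  fixes R :: "real set"
  assumes "closed R" "R \<noteq> {}" "R \<subseteq> {0..}" "bdd_above R" "Sup R \<le> b"
  shows "rate R b = ell (Sup R) b"
proof (rule rate_eqI)
  show "Sup R \<in> R" using assms by (intro closed_contains_Sup) auto
  show "ell (Sup R) b \<le> ell \<gamma> b" if "\<gamma> \<in> R" for \<gamma>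
    using assms that by (intro ell_antimono_below cSup_upper) auto
qed simp

lemma closed_Sup_below_mem:
  fixes R :: "real set"
  assumes "closed R" "a \<notin> R" "x \<in> R" "x < a"
  shows "Sup (R \<inter> {..<a}) \<in> R" "Sup (R \<inter> {..<a}) < a"
proof -
  have "R \<inter> {..<a} = R \<inter> {..a}" using assms(2) by (auto simp: le_less)
  moreover have "Sup (R \<inter> {..a}) \<in> R \<inter> {..a}"
    using assms by (intro closed_contains_Sup closed_Int) auto
  ultimately have "Sup (R \<inter> {..<a}) \<in> R" "Sup (R \<inter> {..<a}) \<le> a" by auto
  then show "Sup (R \<inter> {..<a}) \<in> R" "Sup (R \<inter> {..<a}) < a"
    using assms(2) by (auto simp: order.order_iff_strict)
qed

lemma closed_Inf_above_mem:
  fixes R :: "real set"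
  assumes "closed R" "a \<notin> R" "y \<in> R" "a < y"
  shows "Inf (R \<inter> {a<..}) \<in> R" "a < Inf (R \<inter> {a<..})"
proof -
  have "R \<inter> {a<..} = R \<inter> {a..}" using assms(2) by (auto simp: le_less)
  moreover have "Inf (R \<inter> {a..}) \<in> R \<inter> {a..}"
    using assms by (intro closed_contains_Inf closed_Int) auto
  ultimately have "Inf (R \<inter> {a<..}) \<in> R" "a \<le> Inf (R \<inter> {a<..})" by auto
  then show "Inf (R \<inter> {a<..}) \<in> R" "a < Inf (R \<inter> {a<..})"
    using assms(2) by (auto simp: order.order_iff_strict)
qed

lemma rate_eq_min_ell_gap:
  fixes R :: "real set"
  assumes R: "closed R" "R \<subseteq> {0..}" and a: "a \<notin> R" "x \<in> R" "x < a" "y \<in> R" "a < y"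
  defines "cm \<equiv> Sup (R \<inter> {..<a})" and "cp \<equiv> Inf (R \<inter> {a<..})"
  assumes b: "b \<in> {cm..cp}"
  shows "rate R b = min (ell cm b) (ell cp b)"
proof (rule rate_eqI)
  have "cm \<in> R" "cp \<in> R"
    unfolding cm_def cp_def using R a by (auto intro: closed_Sup_below_mem closed_Inf_above_mem)
  then show "(if ell cm b \<le> ell cp b then cm else cp) \<in> R" by simp
  show "ell (if ell cm b \<le> ell cp b then cm else cp) b \<le> min (ell cm b) (ell cp b)" by (simp add: min_def)
next
  fix \<gamma> assume "\<gamma> \<in> R"
  then consider "\<gamma> < a" | "a < \<gamma>" using a by fastforce
  then show "min (ell cm b) (ell cp b) \<le> ell \<gamma> b"
  proof cases
    case 1
    with \<open>\<gamma> \<in> R\<close> have "\<gamma> \<le> cm" unfolding cm_def by (intro cSup_upper) auto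
    then have "ell cm b \<le> ell \<gamma> b" using \<open>\<gamma> \<in> R\<close> R b by (intro ell_antimono_below) auto
    then show ?thesis by (simp add: min.coboundedI1)
  next
    case 2
    with \<open>\<gamma> \<in> R\<close> have "cp \<le> \<gamma>" unfolding cp_def by (intro cInf_lower) auto
    then have "ell cp b \<le> ell \<gamma> b" using b by (intro ell_mono_above) auto
    then show ?thesis by (simp add: min.coboundedI2)
  qed
qed

lemma exists_mem_below_and_above:
  fixes R :: "real set"
  assumes R: "closed R" "R \<noteq> {}" "R \<subseteq> {0..}" and "a \<notin> R"
    and "\<not> a < Inf R" "\<not> (bdd_above R \<and> Sup R < a)"
  obtains x y where "x \<in> R" "x < a" "y \<in> R" "a < y"
proof -
  have "Inf R \<in> R" "Inf R < a"
    using closed_nonneg_Inf_mem[OF R] assms(4,5) by (auto simp: not_less le_less)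
  moreover obtain y where "y \<in> R" "a < y"
  proof (cases "bdd_above R")
    case True
    then show ?thesis
      using that closed_contains_Sup[OF R(2) True R(1)] assms(4,6) by (metis antisym_conv2 not_le)
  next
    case False
    then show ?thesis using that by (meson bdd_above_def not_le)
  qed
  ultimately show ?thesis using that by blast
qed

lemma rate_eq_0_if_mem:
  assumes "R \<subseteq> {0..}" "a \<in> R"
  shows "rate R a = 0"
  using assms by (intro rate_eqI[of a]) (auto simp: ell_self intro: ell_nonneg)

lemma rate_attained:
  fixes R :: "real set"
  assumes R: "closed R" "R \<noteq> {}" "R \<subseteq> {0..}"
  obtains c where "c \<in> R" "rate R a = ell c a"
proof -
  consider "a < Inf R" | "bdd_above R \<and> Sup R < a" | "a \<in> R"
    | "\<not> a < Inf R" "\<not> (bdd_above R \<and> Sup R < a)" "a \<notin> R"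
    by argo
  then show thesis
  proof cases
    case 1
    then show thesis using that closed_nonneg_Inf_mem(1)[OF R] rate_eq_ell_Inf[OF R] by simp
  next
    case 2
    then show thesis using that closed_contains_Sup[OF R(2) _ R(1)] rate_eq_ell_Sup[OF R] by simp
  next
    case 3
    then show thesis
      using that rate_eq_0_if_mem[OF R(3)] ell_self R(3) by (metis atLeast_iff subsetD)
  next
    case 4
    then obtain x y where "x \<in> R" "x < a" "y \<in> R" "a < y"
      using exists_mem_below_and_above[OF R] by metis
    let ?cm = "Sup (R \<inter> {..<a})" and ?cp = "Inf (R \<inter> {a<..})"
    have "?cm \<in> R" "?cp \<in> R" "a \<in> {?cm..?cp}"
      using closed_Sup_below_mem[OF R(1) \<open>a \<notin> R\<close> \<open>x \<in> R\<close> \<open>x < a\<close>]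
        closed_Inf_above_mem[OF R(1) \<open>a \<notin> R\<close> \<open>y \<in> R\<close> \<open>a < y\<close>] by auto
    moreover have "rate R a = min (ell ?cm a) (ell ?cp a)"
      using rate_eq_min_ell_gap[OF R(1,3) \<open>a \<notin> R\<close> \<open>x \<in> R\<close> \<open>x < a\<close> \<open>y \<in> R\<close> \<open>a < y\<close>]
        \<open>a \<in> {?cm..?cp}\<close> by blast
    ultimately show thesis
      using that[of ?cm] that[of ?cp] by (auto simp: min_def split: if_splits)
  qed
qed

lemma rate_eq_0_iff:
  fixes R :: "real set"
  assumes R: "closed R" "R \<noteq> {}" "R \<subseteq> {0..}"
  shows "rate R a = 0 \<longleftrightarrow> a \<in> R"
proof
  assume "a \<in> R"
  then show "rate R a = 0" using rate_eq_0_if_mem[OF R(3)] by blast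
next
  assume "rate R a = 0"
  moreover obtain c where "c \<in> R" "rate R a = ell c a"
    using rate_attained[OF R] .
  ultimately have "ell c a = 0" by simp
  then have "c = a"
    using \<open>c \<in> R\<close> R(3) ell_pos[of c a] by (cases "a < 0") (auto simp: ell_def)
  with \<open>c \<in> R\<close> show "a \<in> R" by simp
qed

lemma rate_trichotomy:
  fixes R :: "real set"
  assumes R: "closed R" "R \<noteq> {}" "R \<subseteq> {0..}" and "rate R a > 0"
  shows "let P1 = (a < Inf R \<and> (\<forall>b \<le> Inf R. rate R b = ell (Inf R) b));
           P2 = (bdd_above R \<and> a > Sup R \<and> (\<forall>b \<ge> Sup R. rate R b = ell (Sup R) b));
           P3 = (\<not> (a < Inf R) \<and> \<not> (bdd_above R \<and> a > Sup R) \<and>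
                 (let cm = Sup (R \<inter> {..<a}); cp = Inf (R \<inter> {a<..})
                  in \<forall>b \<in> {cm..cp}. rate R b = min (ell cm b) (ell cp b)))
       in (P1 \<and> \<not> P2 \<and> \<not> P3) \<or> (\<not> P1 \<and> P2 \<and> \<not> P3) \<or> (\<not> P1 \<and> \<not> P2 \<and> P3)"
proof -
  have "a \<notin> R" using assms(4) rate_eq_0_iff[OF R, of a] by (metis order_less_irrefl)
  have P1: "(a < Inf R \<and> (\<forall>b \<le> Inf R. rate R b = ell (Inf R) b)) \<longleftrightarrow> a < Inf R"
    using rate_eq_ell_Inf[OF R] by blast
  have P2: "(bdd_above R \<and> a > Sup R \<and> (\<forall>b \<ge> Sup R. rate R b = ell (Sup R) b))
      \<longleftrightarrow> bdd_above R \<and> a > Sup R"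
    using rate_eq_ell_Sup[OF R] by auto
  have P3: "\<forall>b \<in> {Sup (R \<inter> {..<a})..Inf (R \<inter> {a<..})}.
              rate R b = min (ell (Sup (R \<inter> {..<a})) b) (ell (Inf (R \<inter> {a<..})) b)"
    if gap: "\<not> a < Inf R" "\<not> (bdd_above R \<and> Sup R < a)"
  proof -
    obtain x y where "x \<in> R" "x < a" "y \<in> R" "a < y"
      using exists_mem_below_and_above[OF R \<open>a \<notin> R\<close> gap] .
    then show ?thesis
      using rate_eq_min_ell_gap[OF R(1,3) \<open>a \<notin> R\<close>] by blast
  qed
  have "Inf R \<le> Sup R" if "bdd_above R"
    using cSup_upper[OF closed_nonneg_Inf_mem(1)[OF R] that] .
  then show ?thesis
    unfolding Let_def P1 P2 using P3 by auto
qed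

definition rv_support :: "'w measure \<Rightarrow> ('w \<Rightarrow> real) \<Rightarrow> real set" where
  "rv_support M X = {\<gamma>. \<forall>\<epsilon>>0. 0 < measure M {\<omega> \<in> space M. X \<omega> \<in> {\<gamma> - \<epsilon> <..< \<gamma> + \<epsilon>}}}"

lemma attainable_const:
  "attainable M lam kap mu t (\<lambda>n. J) = rv_support M (\<lambda>\<omega>. phi lam kap mu t (J \<omega>)) \<inter> {0..}"
  by (auto simp: attainable_def rv_support_def)

context prob_space
begin

lemma closed_rv_support:
  assumes [measurable]: "X \<in> borel_measurable M"
  shows "closed (rv_support M X)"
proof -
  have "\<gamma> \<in> rv_support M X" if "\<gamma> \<in> closure (rv_support M X)" for \<gamma>
    unfolding rv_support_def
  proof (intro CollectI allI impI)
    fix \<epsilon> :: real assume "0 < \<epsilon>"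
    then obtain y where y: "y \<in> rv_support M X" "dist y \<gamma> < \<epsilon> / 2"
      using \<open>\<gamma> \<in> closure _\<close> closure_approachable half_gt_zero by metis
    have "0 < measure M {\<omega> \<in> space M. X \<omega> \<in> {y - \<epsilon> / 2 <..< y + \<epsilon> / 2}}"
      using y(1) \<open>0 < \<epsilon>\<close> by (simp add: rv_support_def)
    also have "\<dots> \<le> measure M {\<omega> \<in> space M. X \<omega> \<in> {\<gamma> - \<epsilon> <..< \<gamma> + \<epsilon>}}"
    proof (intro finite_measure_mono subsetI)
      show "\<omega> \<in> {\<omega> \<in> space M. X \<omega> \<in> {\<gamma> - \<epsilon> <..< \<gamma> + \<epsilon>}}"
        if "\<omega> \<in> {\<omega> \<in> space M. X \<omega> \<in> {y - \<epsilon> / 2 <..< y + \<epsilon> / 2}}" for \<omega>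
      proof -
        have "\<bar>y - \<gamma>\<bar> < \<epsilon> / 2" using y(2) by (simp add: dist_real_def)
        moreover have "\<omega> \<in> space M" "y - \<epsilon> / 2 < X \<omega>" "X \<omega> < y + \<epsilon> / 2" using that by auto
        ultimately have "\<gamma> - \<epsilon> < X \<omega>" "X \<omega> < \<gamma> + \<epsilon>" by arith+
        with \<open>\<omega> \<in> space M\<close> show ?thesis by simp
      qed
    qed simp
    finally show "0 < measure M {\<omega> \<in> space M. X \<omega> \<in> {\<gamma> - \<epsilon> <..< \<gamma> + \<epsilon>}}" .
  qed
  then show ?thesis using closure_subset_eq by blast
qed

lemma exists_prob_le_pos:
  fixes X :: "'a \<Rightarrow> real"
  assumes [measurable]: "X \<in> borel_measurable M"
  shows "\<exists>x. 0 < measure M {\<omega> \<in> space M. X \<omega> \<le> x}"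
proof (rule ccontr)
  assume "\<nexists>x. 0 < measure M {\<omega> \<in> space M. X \<omega> \<le> x}"
  then have "measure M {\<omega> \<in> space M. X \<omega> \<le> real n} = 0" for n
    by (metis less_eq_real_def measure_nonneg)
  then have "{\<omega> \<in> space M. X \<omega> \<le> real n} \<in> null_sets M" for n
    by (intro null_setsI) (auto simp: emeasure_eq_measure)
  then have "(\<Union>n. {\<omega> \<in> space M. X \<omega> \<le> real n}) \<in> null_sets M" by blast
  moreover have "(\<Union>n. {\<omega> \<in> space M. X \<omega> \<le> real n}) = space M"
    using real_arch_simple by blast
  ultimately show False by (metis null_setsD1 emeasure_space_1 zero_neq_one)
qed

lemma rv_support_bounded_below_nonempty:
  fixes X :: "'a \<Rightarrow> real"
  assumes [measurable]: "X \<in> borel_measurable M" and lower: "\<And>\<omega>. \<omega> \<in> space M \<Longrightarrow> b \<le> X \<omega>"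
  shows "\<exists>c\<ge>b. c \<in> rv_support M X"
proof -
  define F where "F x = measure M {\<omega> \<in> space M. X \<omega> \<le> x}" for x
  have F_mono: "F x \<le> F y" if "x \<le> y" for x y
    unfolding F_def using that by (intro finite_measure_mono) auto
  define S where "S = {x. 0 < F x}"
  have "S \<noteq> {}" using exists_prob_le_pos unfolding S_def F_def by auto
  have S_lower: "b \<le> x" if "x \<in> S" for x
  proof (rule ccontr)
    assume "\<not> b \<le> x"
    then have "{\<omega> \<in> space M. X \<omega> \<le> x} = {}" using lower by (auto simp: not_le intro: less_le_trans)
    then have "F x = 0" unfolding F_def by (metis measure_empty)
    with that show False by (simp add: S_def)
  qed
  then have "bdd_below S" by (auto simp: bdd_below_def)
  \<comment> \<open>\<open>c\<close> is the essential infimum of \<open>X\<close>\<close>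
  define c where "c = Inf S"
  have "b \<le> c" unfolding c_def using \<open>S \<noteq> {}\<close> S_lower by (intro cInf_greatest) auto
  moreover have "c \<in> rv_support M X"
    unfolding rv_support_def
  proof (intro CollectI allI impI)
    fix \<epsilon> :: real assume "0 < \<epsilon>"
    then obtain x where "x \<in> S" "x < c + \<epsilon> / 2"
      using cInf_less_iff[OF \<open>S \<noteq> {}\<close> \<open>bdd_below S\<close>, of "c + \<epsilon> / 2"] by (auto simp: c_def)
    then have "0 < F (c + \<epsilon> / 2)"
      using F_mono[of x "c + \<epsilon> / 2"] by (simp add: S_def)
    moreover have "c - \<epsilon> \<notin> S"
      using cInf_lower[OF _ \<open>bdd_below S\<close>, of "c - \<epsilon>"] \<open>0 < \<epsilon>\<close> by (auto simp: c_def)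
    then have "F (c - \<epsilon>) = 0" using measure_nonneg[of M] by (simp add: S_def F_def order_less_le)
    moreover have "F (c + \<epsilon> / 2) \<le> F (c - \<epsilon>) + measure M {\<omega> \<in> space M. X \<omega> \<in> {c - \<epsilon> <..< c + \<epsilon>}}"
    proof -
      have "F (c + \<epsilon> / 2) \<le> measure M ({\<omega> \<in> space M. X \<omega> \<le> c - \<epsilon>} \<union> {\<omega> \<in> space M. X \<omega> \<in> {c - \<epsilon> <..< c + \<epsilon>}})"
        unfolding F_def using \<open>0 < \<epsilon>\<close> by (intro finite_measure_mono) auto
      also have "\<dots> \<le> F (c - \<epsilon>) + measure M {\<omega> \<in> space M. X \<omega> \<in> {c - \<epsilon> <..< c + \<epsilon>}}"
        unfolding F_def by (intro measure_subadditive) auto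
      finally show ?thesis .
    qed
    ultimately show "0 < measure M {\<omega> \<in> space M. X \<omega> \<in> {c - \<epsilon> <..< c + \<epsilon>}}" by simp
  qed
  ultimately show ?thesis by blast
qed

end

lemma integral_eq_set_lebesgue_integral_nonneg:
  fixes f :: "real \<Rightarrow> real"
  assumes "f \<in> borel_measurable borel" "S \<in> sets borel" "\<And>x. x \<in> S \<Longrightarrow> 0 \<le> f x"
  shows "integral S f = (LINT x:S|lborel. f x)"
proof (cases "set_integrable lborel S f")
  case True
  then show ?thesis by (simp add: set_borel_integral_eq_integral(2))
next
  case False
  have "\<not> f integrable_on S"
  proof
    assume "f integrable_on S"
    then have "f absolutely_integrable_on S"
      using assms(3) by (rule nonnegative_absolutely_integrable_1)
    moreover have "(\<lambda>x. indicator S x *\<^sub>R f x) \<in> borel_measurable lborel"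
      using assms(1,2) by measurable
    ultimately have "set_integrable lborel S f"
      unfolding set_integrable_def using integrable_completion by blast
    with False show False ..
  qed
  with False show ?thesis
    by (simp add: not_integrable_integral not_integrable_integral_eq set_lebesgue_integral_def
        set_integrable_def)
qed

lemma phi_nonneg:
  assumes "\<And>x. 0 \<le> lam x"
  shows "0 \<le> phi lam kap mu t f"
proof (cases "(\<lambda>s. lam (f s) * exp (- kap (f s) * integral {s..t} (\<lambda>r. mu (f r)))) integrable_on {0..t}")
  case True
  then show ?thesis
    unfolding phi_def using assms by (intro integral_nonneg) auto
next
  case False
  then show ?thesis by (simp add: phi_def not_integrable_integral)
qed

lemma phi_cong:
  assumes "\<And>s. s \<in> {0..t} \<Longrightarrow> f s = g s"
  shows "phi lam kap mu t f = phi lam kap mu t g"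
  unfolding phi_def using assms by (intro integral_cong) (auto intro!: integral_cong)

lemma phi_eq_set_lebesgue_integral:
  fixes f :: "real \<Rightarrow> 'e::metric_space"
  assumes [measurable]: "lam \<in> borel_measurable borel" "kap \<in> borel_measurable borel"
    "mu \<in> borel_measurable borel" "f \<in> borel_measurable borel"
    and "\<And>x. 0 \<le> lam x" "\<And>x. 0 \<le> mu x"
  shows "phi lam kap mu t f =
    (LINT s:{0..t}|lborel. lam (f s) * exp (- kap (f s) * (LINT r:{s..t}|lborel. mu (f r))))"
proof -
  have [measurable]: "f \<in> borel_measurable lborel" by simp
  have [measurable]: "Measurable.pred (lborel \<Otimes>\<^sub>M lborel) (\<lambda>x. snd x \<in> {fst x..t})"
    by (simp only: atLeastAtMost_iff) measurable
  have "(\<lambda>s. lam (f s) * exp (- kap (f s) * (LINT r:{s..t}|lborel. mu (f r))))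
      \<in> borel_measurable lborel"
    unfolding set_lebesgue_integral_def by measurable
  moreover have "integral {s..t} (\<lambda>r. mu (f r)) = (LINT r:{s..t}|lborel. mu (f r))" for s
    using assms by (intro integral_eq_set_lebesgue_integral_nonneg) auto
  ultimately show ?thesis
    unfolding phi_def using assms by (simp add: integral_eq_set_lebesgue_integral_nonneg)
qed

text \<open>The grid point \<open>(\<lfloor>(n+1)s\<rfloor> + 1)/(n+1)\<close> is the first point of \<open>\<nat>/(n+1)\<close> strictly right of \<open>s\<close>.\<close>
lemma grid_approx_at_right:
  fixes s :: real
  assumes "0 \<le> s"
  shows "filterlim (\<lambda>n::nat. (real (nat \<lfloor>real (Suc n) * s\<rfloor>) + 1) / real (Suc n)) (at_right s) sequentially"
proof -
  define d where "d n = (of_int \<lfloor>real (Suc n) * s\<rfloor> + 1) / real (Suc n)" for n :: nat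
  have d_eq: "(real (nat \<lfloor>real (Suc n) * s\<rfloor>) + 1) / real (Suc n) = d n" for n
    using assms by (simp add: d_def)
  have above: "s < d n" for n
  proof -
    have "real (Suc n) * s < of_int \<lfloor>real (Suc n) * s\<rfloor> + 1" by linarith
    then show ?thesis unfolding d_def by (simp add: field_simps)
  qed
  have below: "d n \<le> s + inverse (real (Suc n))" for n
  proof -
    have "d n \<le> (real (Suc n) * s + 1) / real (Suc n)"
      unfolding d_def by (intro divide_right_mono) linarith+
    then show ?thesis by (simp add: field_simps del: of_nat_Suc)
  qed
  have lim: "(\<lambda>n. s + inverse (real (Suc n))) \<longlonglongrightarrow> s"
    using tendsto_add[OF tendsto_const LIMSEQ_inverse_real_of_nat] by simp
  have lower: "eventually (\<lambda>n. s \<le> d n) sequentially"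
    by (intro always_eventually allI less_imp_le above)
  have upper: "eventually (\<lambda>n. d n \<le> s + inverse (real (Suc n))) sequentially"
    by (intro always_eventually allI below)
  have "d \<longlonglongrightarrow> s"
    using tendsto_sandwich[OF lower upper tendsto_const lim] .
  then show ?thesis
    unfolding d_eq filterlim_at using above by (auto intro!: always_eventually simp: order_less_imp_not_eq2)
qed

lemma cadlag_process_measurable_pair:
  fixes J :: "'w \<Rightarrow> real \<Rightarrow> 'e::metric_space"
  assumes "cadlag_process M J"
  shows "(\<lambda>(\<omega>, s). J \<omega> (max 0 s)) \<in> borel_measurable (M \<Otimes>\<^sub>M lborel)"
proof -
  \<comment> \<open>sample at the next grid point to the right: countably many values, and right-continuity\<close>
  define d where "d n s = (real (nat \<lfloor>real (Suc n) * max 0 s\<rfloor>) + 1) / real (Suc n)" for n s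
  have J_meas: "(\<lambda>\<omega>. J \<omega> s) \<in> borel_measurable M" if "0 \<le> s" for s
    using assms that by (simp add: cadlag_process_def)
  have grid_meas: "(\<lambda>p. J (fst p) (d n (snd p))) \<in> borel_measurable (M \<Otimes>\<^sub>M lborel)" for n
  proof -
    have "(\<lambda>p. J (fst p) ((real k + 1) / real (Suc n))) \<in> borel_measurable (M \<Otimes>\<^sub>M lborel)" for k
      by (rule measurable_compose[OF measurable_fst J_meas]) simp
    moreover have "(\<lambda>p. nat \<lfloor>real (Suc n) * max 0 (snd p)\<rfloor>) \<in> M \<Otimes>\<^sub>M lborel \<rightarrow>\<^sub>M count_space UNIV"
      by measurable
    ultimately show ?thesis
      unfolding d_def by (rule measurable_compose_countable[where f = "\<lambda>k p. J (fst p) ((real k + 1) / real (Suc n))"])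
  qed
  have "(\<lambda>n. J \<omega> (d n s)) \<longlonglongrightarrow> J \<omega> (max 0 s)" if "\<omega> \<in> space M" for \<omega> s
  proof -
    have "continuous (at_right (max 0 s)) (J \<omega>)"
      using assms that by (simp add: cadlag_process_def cadlag_def)
    then have "(J \<omega> \<longlongrightarrow> J \<omega> (max 0 s)) (at_right (max 0 s))"
      by (simp add: continuous_within)
    then show ?thesis
      using grid_approx_at_right[of "max 0 s"] unfolding d_def by (rule filterlim_compose) simp
  qed
  then show ?thesis
    unfolding case_prod_beta
    by (intro borel_measurable_LIMSEQ_metric[OF grid_meas]) (auto simp: space_pair_measure)
qed

lemma phi_cadlag_process_measurable:
  fixes J :: "'w \<Rightarrow> real \<Rightarrow> 'e::metric_space"
  assumes "continuous_on UNIV lam" "continuous_on UNIV kap" "continuous_on UNIV mu"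
    and "\<And>x. 0 \<le> lam x" "\<And>x. 0 \<le> mu x" and "cadlag_process M J"
  shows "(\<lambda>\<omega>. phi lam kap mu t (J \<omega>)) \<in> borel_measurable M"
proof -
  have [measurable]: "lam \<in> borel_measurable borel" "kap \<in> borel_measurable borel"
      "mu \<in> borel_measurable borel"
    using assms(1-3) by (auto intro: borel_measurable_continuous_onI)
  \<comment> \<open>paths are only controlled on \<open>[0,\<infinity>)\<close>; freezing them on the negative axis leaves \<open>phi\<close> unchanged\<close>
  define F where "F \<omega> r = J \<omega> (max 0 r)" for \<omega> r
  have F_meas [measurable]: "(\<lambda>p. F (fst p) (snd p)) \<in> borel_measurable (M \<Otimes>\<^sub>M lborel)"
    using cadlag_process_measurable_pair[OF assms(6)] by (simp add: F_def case_prod_beta)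
  have [measurable]: "(\<lambda>x. F (fst (fst x)) (snd x)) \<in> borel_measurable ((M \<Otimes>\<^sub>M lborel) \<Otimes>\<^sub>M lborel)"
  proof -
    have "(\<lambda>x. (fst (fst x), snd x)) \<in> (M \<Otimes>\<^sub>M lborel) \<Otimes>\<^sub>M lborel \<rightarrow>\<^sub>M M \<Otimes>\<^sub>M lborel"
      by measurable
    from measurable_compose[OF this F_meas] show ?thesis by simp
  qed
  have [measurable]: "Measurable.pred ((M \<Otimes>\<^sub>M lborel) \<Otimes>\<^sub>M lborel) (\<lambda>x. snd x \<in> {snd (fst x)..t})"
    by (simp only: atLeastAtMost_iff) measurable
  have "phi lam kap mu t (J \<omega>) =
      (LINT s:{0..t}|lborel. lam (F \<omega> s) * exp (- kap (F \<omega> s) * (LINT r:{s..t}|lborel. mu (F \<omega> r))))"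
    if "\<omega> \<in> space M" for \<omega>
  proof -
    have "(\<lambda>r. F \<omega> r) \<in> borel_measurable lborel"
      using measurable_Pair2[OF _ that, of "\<lambda>p. F (fst p) (snd p)"] by simp
    then have "F \<omega> \<in> borel_measurable borel" by simp
    have "phi lam kap mu t (J \<omega>) = phi lam kap mu t (F \<omega>)"
      by (rule phi_cong) (simp add: F_def)
    also have "\<dots> = (LINT s:{0..t}|lborel. lam (F \<omega> s) * exp (- kap (F \<omega> s) * (LINT r:{s..t}|lborel. mu (F \<omega> r))))"
      using assms(4,5) \<open>F \<omega> \<in> borel_measurable borel\<close> by (intro phi_eq_set_lebesgue_integral) auto
    finally show ?thesis .
  qed
  moreover have "(\<lambda>\<omega>. LINT s:{0..t}|lborel. lam (F \<omega> s) * exp (- kap (F \<omega> s) * (LINT r:{s..t}|lborel. mu (F \<omega> r))))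
      \<in> borel_measurable M"
    unfolding set_lebesgue_integral_def by measurable
  ultimately show ?thesis
    by (simp cong: measurable_cong)
qed

theorem proposition1:
  fixes M :: "'w measure" and J :: "'w \<Rightarrow> real \<Rightarrow> 'e::metric_space"
    and lam kap mu :: "'e \<Rightarrow> real" and t :: real
  assumes "prob_space M"
    and "continuous_on UNIV lam" and "continuous_on UNIV kap" and "continuous_on UNIV mu"
    and "\<And>x. lam x \<ge> 0" and "\<And>x. kap x \<ge> 0" and "\<And>x. mu x \<ge> 0"
    and "t \<ge> 0"
    and "cadlag_process M J"
  defines "R \<equiv> attainable M lam kap mu t (\<lambda>n. J)"
  defines "I \<equiv> rate R"
  shows "(\<forall>a. I a = 0 \<longleftrightarrow> a \<in> R) \<and>
    (\<forall>a. I a > 0 \<longrightarrow>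
      (let P1 = (a < Inf R \<and> (\<forall>b \<le> Inf R. I b = ell (Inf R) b));
           P2 = (bdd_above R \<and> a > Sup R \<and> (\<forall>b \<ge> Sup R. I b = ell (Sup R) b));
           P3 = (\<not> (a < Inf R) \<and> \<not> (bdd_above R \<and> a > Sup R) \<and>
                 (let cm = Sup (R \<inter> {..<a}); cp = Inf (R \<inter> {a<..})
                  in \<forall>b \<in> {cm..cp}. I b = min (ell cm b) (ell cp b)))
       in (P1 \<and> \<not> P2 \<and> \<not> P3) \<or> (\<not> P1 \<and> P2 \<and> \<not> P3) \<or> (\<not> P1 \<and> \<not> P2 \<and> P3)))"
proof -
  interpret prob_space M by fact
  define X where "X \<omega> = phi lam kap mu t (J \<omega>)" for \<omega>
  have X_meas: "X \<in> borel_measurable M"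
    unfolding X_def using assms(2-5,7,9) by (rule phi_cadlag_process_measurable)
  have R_eq: "R = rv_support M X \<inter> {0..}"
    unfolding R_def X_def by (rule attainable_const)
  have "0 \<le> X \<omega>" for \<omega>
    unfolding X_def using assms(5) by (rule phi_nonneg)
  then have "\<exists>c\<ge>0. c \<in> rv_support M X"
    using rv_support_bounded_below_nonempty[OF X_meas] by blast
  then have "R \<noteq> {}" using R_eq by auto
  moreover have "closed R" using closed_rv_support[OF X_meas] R_eq by (simp add: closed_Int)
  moreover have "R \<subseteq> {0..}" using R_eq by auto
  ultimately show ?thesis
    unfolding I_def by (intro conjI allI impI rate_eq_0_iff rate_trichotomy)
qed

end
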